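(* Let $\pi,\tau\in\mathfrak{S}_m$. If $\mathcal{O}_\pi=\mathcal{O}_\tau$ and, for all $i\in\mathcal{O}_\pi$, we have $\{\pi_1,\dots,\pi_{m-i}\}=\{\tau_1,\dots,\tau_{m-i}\}$ and $\{\pi_{i+1},\dots,\pi_m\}=\{\tau_{i+1},\dots,\tau_m\}$, then $\pi$ and $\tau$ are super-strongly c-Wilf equivalent.
   Context: $\mathfrak{S}_n$ is the symmetric group on $[n]$, permutations written $\sigma=\sigma_1\cdots\sigma_n$. The standardization $\operatorname{st}(w)$ of a word of distinct integers replaces its smallest entry by 1, the next smallest by 2, etc. For $\pi\in\mathfrak{S}_m$ and $\sigma\in\mathfrak{S}_n$, $\operatorname{Em}(\pi,\sigma)=\{i\in[n-m+1]:\operatorname{st}(\sigma_i\cdots\sigma_{i+m-1})=\pi\}$. For a set $S$ of positive integers, $a^\pi_{n,S}$ is the number of $\sigma\in\mathfrak{S}_n$ with $\operatorname{Em}(\pi,\sigma)=S$; $\pi$ and $\tau$ are super-strongly c-Wilf equivalent if $a^\pi_{n,S}=a^\tau_{n,S}$ for all $n$ and all $S$. The overlap set of $\pi\in\mathfrak{S}_m$ is $\mathcal{O}_\pi=\{i\in[m-1]:\operatorname{st}(\pi_{i+1}\cdots\pi_m)=\operatorname{st}(\pi_1\cdots\pi_{m-i})\}$. *)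

theory Defs
  imports Main
begin

definition perms :: "nat \<Rightarrow> nat list set" where
  "perms n = {s. distinct s \<and> set s = {1..n}}"

definition st :: "nat list \<Rightarrow> nat list" where
  "st w = map (\<lambda>x. card {y \<in> set w. y \<le> x}) w"

text \<open>Em(pi, sigma), positions 1-indexed: i in [n-m+1] with st(sigma_i ... sigma_(i+m-1)) = pi.\<close>
definition Em :: "nat list \<Rightarrow> nat list \<Rightarrow> nat set" where
  "Em p s = {i. 1 \<le> i \<and> i + length p - 1 \<le> length s \<and>
                 st (take (length p) (drop (i - 1) s)) = p}"

definition a_count :: "nat list \<Rightarrow> nat \<Rightarrow> nat set \<Rightarrow> nat" where
  "a_count p n S = card {s \<in> perms n. Em p s = S}"

definition super_strongly_cWilf_equiv :: "nat list \<Rightarrow> nat list \<Rightarrow> bool" where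
  "super_strongly_cWilf_equiv p t \<longleftrightarrow> (\<forall>n S. a_count p n S = a_count t n S)"

definition overlap :: "nat list \<Rightarrow> nat set" where
  "overlap p = {i. 1 \<le> i \<and> i \<le> length p - 1 \<and>
                  st (drop i p) = st (take (length p - i) p)}"

end

theory Submission
  imports Defs
begin

(* Fix a set S of starting positions of occurrences of pi in sigma and repaint every window
   starting in S: keep the values of the window but arrange them in the relative order of tau
   instead of pi.  Two windows of S at distance d < m overlap, so d lies in the overlap set of pi,
   hence of tau, and the hypothesis on the prefix and suffix value sets makes the two repaintings
   agree on the common part.  Repainting back with pi inverts the map, so the permutations with
   S contained in Em(pi, sigma) and those with S contained in Em(tau, sigma) are equinumerous.
   Inverting these superset counts over the lattice of subsets gives a^pi_{n,S} = a^tau_{n,S}. *)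

definition order_isomorphic :: "nat list \<Rightarrow> nat list \<Rightarrow> bool" where
  "order_isomorphic u v \<longleftrightarrow> length u = length v \<and>
     (\<forall>i<length u. \<forall>j<length u. (u!i < u!j) = (v!i < v!j))"

lemma order_isomorphic_sym: "order_isomorphic u v \<Longrightarrow> order_isomorphic v u"
  by (simp add: order_isomorphic_def)

lemma order_isomorphic_trans:
  "order_isomorphic u v \<Longrightarrow> order_isomorphic v w \<Longrightarrow> order_isomorphic u w"
  by (simp add: order_isomorphic_def)

lemma order_isomorphic_drop: "order_isomorphic u v \<Longrightarrow> order_isomorphic (drop d u) (drop d v)"
  by (auto simp: order_isomorphic_def)

lemma order_isomorphic_take: "order_isomorphic u v \<Longrightarrow> order_isomorphic (take d u) (take d v)"
  by (auto simp: order_isomorphic_def)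

lemma length_st [simp]: "length (st w) = length w"
  by (simp add: st_def)

lemma nth_st: "i < length w \<Longrightarrow> st w ! i = card {y \<in> set w. y \<le> w!i}"
  by (simp add: st_def)

lemma card_le_less_card_le_iff:
  fixes V :: "nat set"
  assumes "finite V" "x \<in> V" "y \<in> V"
  shows "card {z\<in>V. z \<le> x} < card {z\<in>V. z \<le> y} \<longleftrightarrow> x < y"
proof
  assume "x < y"
  hence "{z\<in>V. z \<le> x} \<subseteq> {z\<in>V. z \<le> y}" "y \<in> {z\<in>V. z \<le> y} - {z\<in>V. z \<le> x}"
    using assms by auto
  hence "{z\<in>V. z \<le> x} \<subset> {z\<in>V. z \<le> y}" by blast
  thus "card {z\<in>V. z \<le> x} < card {z\<in>V. z \<le> y}"
    using assms by (intro psubset_card_mono) auto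
next
  assume "card {z\<in>V. z \<le> x} < card {z\<in>V. z \<le> y}"
  moreover have "\<not> x < y \<Longrightarrow> card {z\<in>V. z \<le> y} \<le> card {z\<in>V. z \<le> x}"
    using assms by (intro card_mono) auto
  ultimately show "x < y" by linarith
qed

lemma st_less_iff: "i < length w \<Longrightarrow> j < length w \<Longrightarrow> st w ! i < st w ! j \<longleftrightarrow> w!i < w!j"
  by (simp add: nth_st card_le_less_card_le_iff)

lemma card_le_nth_eq_card_indices:
  assumes "distinct u" "i < length u"
  shows "card {y\<in>set u. y \<le> u!i} = card {j. j < length u \<and> u!j \<le> u!i}"
proof -
  have "{y\<in>set u. y \<le> u!i} = (!) u ` {j. j < length u \<and> u!j \<le> u!i}"
    by (auto simp: in_set_conv_nth)
  moreover have "inj_on ((!) u) {j. j < length u \<and> u!j \<le> u!i}"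
    using assms by (intro inj_on_nth) auto
  ultimately show ?thesis by (simp add: card_image)
qed

lemma st_eq_iff_order_isomorphic:
  assumes "distinct u" "distinct v"
  shows "st u = st v \<longleftrightarrow> order_isomorphic u v"
proof
  assume st: "st u = st v"
  hence "length u = length v" by (metis length_st)
  thus "order_isomorphic u v"
    using st st_less_iff[of _ u] st_less_iff[of _ v] by (auto simp: order_isomorphic_def)
next
  assume iso: "order_isomorphic u v"
  hence len: "length u = length v" by (simp add: order_isomorphic_def)
  show "st u = st v"
  proof (rule nth_equalityI)
    fix i assume i: "i < length (st u)"
    have "{j. j < length u \<and> u!j \<le> u!i} = {j. j < length v \<and> v!j \<le> v!i}"
      using iso i len unfolding order_isomorphic_def by (auto simp: not_less[symmetric])
    thus "st u ! i = st v ! i"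
      using i len assms by (simp add: nth_st card_le_nth_eq_card_indices)
  qed (simp add: len)
qed

lemma perms_distinct: "p \<in> perms m \<Longrightarrow> distinct p"
  by (simp add: perms_def)

lemma perms_length: "p \<in> perms m \<Longrightarrow> length p = m"
  using distinct_card[of p] by (auto simp: perms_def)

lemma finite_perms: "finite (perms n)"
proof (rule finite_subset)
  show "perms n \<subseteq> {xs. set xs \<subseteq> {1..n} \<and> length xs = n}"
    using perms_length by (auto simp: perms_def)
qed (simp add: finite_lists_length_eq)

lemma st_perm:
  assumes "p \<in> perms m"
  shows "st p = p"
proof (rule nth_equalityI)
  fix i assume "i < length (st p)"
  moreover from this have "{y\<in>set p. y \<le> p!i} = {1..p!i}"
    using assms nth_mem[of i p] by (auto simp: perms_def)
  ultimately show "st p ! i = p ! i" by (simp add: nth_st)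
qed simp

lemma st_eq_perm_iff:
  assumes "distinct w" "p \<in> perms m"
  shows "st w = p \<longleftrightarrow> order_isomorphic w p"
  using st_eq_iff_order_isomorphic[OF assms(1) perms_distinct[OF assms(2)]] st_perm[OF assms(2)]
  by simp

definition nth_least :: "nat set \<Rightarrow> nat \<Rightarrow> nat" where
  "nth_least V r = sorted_list_of_set V ! r"

lemma nth_least_in: "finite V \<Longrightarrow> r < card V \<Longrightarrow> nth_least V r \<in> V"
  unfolding nth_least_def by (metis length_sorted_list_of_set nth_mem set_sorted_list_of_set)

lemma nth_least_less_iff:
  assumes "finite V" "r < card V" "s < card V"
  shows "nth_least V r < nth_least V s \<longleftrightarrow> r < s"
proof -
  have mono: "nth_least V a < nth_least V b" if "a < b" "b < card V" for a b
    unfolding nth_least_def using that assms(1)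
    by (metis length_sorted_list_of_set sorted_wrt_nth_less strict_sorted_list_of_set)
  show ?thesis
    using mono[of r s] mono[of s r] assms by (cases r s rule: linorder_cases) auto
qed

lemma nth_least_inj:
  "finite V \<Longrightarrow> r < card V \<Longrightarrow> s < card V \<Longrightarrow> nth_least V r = nth_least V s \<longleftrightarrow> r = s"
  using nth_least_less_iff[of V r s] nth_least_less_iff[of V s r] by (auto simp: nat_neq_iff)

lemma nth_least_surj: "finite V \<Longrightarrow> x \<in> V \<Longrightarrow> \<exists>r<card V. nth_least V r = x"
  unfolding nth_least_def
  by (metis in_set_conv_nth length_sorted_list_of_set set_sorted_list_of_set)

lemma card_le_nth_least:
  assumes "finite V" "r < card V"
  shows "card {y\<in>V. y \<le> nth_least V r} = Suc r"
proof -
  have "{y\<in>V. y \<le> nth_least V r} = nth_least V ` {..r}"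
  proof (intro equalityI subsetI)
    fix y assume y: "y \<in> {y\<in>V. y \<le> nth_least V r}"
    then obtain s where "s < card V" "nth_least V s = y"
      using nth_least_surj[OF assms(1)] by blast
    with y assms show "y \<in> nth_least V ` {..r}"
      by (auto simp: nth_least_less_iff not_less[symmetric])
  next
    fix y assume "y \<in> nth_least V ` {..r}"
    with assms show "y \<in> {y\<in>V. y \<le> nth_least V r}"
      by (auto simp: nth_least_in nth_least_less_iff le_less)
  qed
  moreover have "inj_on (nth_least V) {..r}"
    using assms nth_least_inj by (auto simp: inj_on_def)
  ultimately show ?thesis by (simp add: card_image)
qed

definition pattern_on :: "nat set \<Rightarrow> nat list \<Rightarrow> nat list" where
  "pattern_on V q = map (\<lambda>r. nth_least V (r - 1)) q"

lemma length_pattern_on [simp]: "length (pattern_on V q) = length q"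
  by (simp add: pattern_on_def)

lemma nth_pattern_on: "i < length q \<Longrightarrow> pattern_on V q ! i = nth_least V (q!i - 1)"
  by (simp add: pattern_on_def)

lemma drop_pattern_on: "drop d (pattern_on V q) = pattern_on V (drop d q)"
  by (simp add: pattern_on_def drop_map)

lemma take_pattern_on: "take d (pattern_on V q) = pattern_on V (take d q)"
  by (simp add: pattern_on_def take_map)

lemma set_pattern_on: "set (pattern_on V q) = (\<lambda>r. nth_least V (r - 1)) ` set q"
  by (simp add: pattern_on_def)

lemma order_isomorphic_pattern_on:
  assumes "finite V" "set q \<subseteq> {1..card V}"
  shows "order_isomorphic (pattern_on V q) q"
  unfolding order_isomorphic_def
proof (intro conjI allI impI)
  fix i j assume "i < length (pattern_on V q)" "j < length (pattern_on V q)"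
  moreover from this have "q!i \<in> {1..card V}" "q!j \<in> {1..card V}"
    using assms(2) nth_mem by force+
  ultimately show "(pattern_on V q ! i < pattern_on V q ! j) = (q ! i < q ! j)"
    using assms(1) by (auto simp: nth_pattern_on nth_least_less_iff)
qed simp

lemma distinct_pattern_on:
  assumes "finite V" "set q \<subseteq> {1..card V}" "distinct q"
  shows "distinct (pattern_on V q)"
proof -
  have "inj_on (\<lambda>r. nth_least V (r - 1)) (set q)"
  proof (rule inj_onI)
    fix x y assume "x \<in> set q" "y \<in> set q" "nth_least V (x - 1) = nth_least V (y - 1)"
    moreover from this have "x \<in> {1..card V}" "y \<in> {1..card V}"
      using assms(2) by blast+
    moreover from this have "x - 1 < card V" "y - 1 < card V" by auto
    ultimately show "x = y"
      using nth_least_inj[OF assms(1), of "x - 1" "y - 1"] by (simp; linarith)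
  qed
  thus ?thesis using assms(3) by (simp add: pattern_on_def distinct_map)
qed

lemma set_pattern_on_perm:
  assumes "finite V" "q \<in> perms (card V)"
  shows "set (pattern_on V q) = V"
proof -
  have "set q = Suc ` {..<card V}"
    using assms(2) by (simp add: perms_def image_Suc_lessThan)
  hence "set (pattern_on V q) = nth_least V ` {..<card V}"
    by (simp add: set_pattern_on image_image)
  also have "\<dots> = V"
  proof (intro equalityI subsetI)
    fix x assume "x \<in> V"
    then obtain r where "r < card V" "x = nth_least V r"
      using nth_least_surj[OF assms(1)] by metis
    thus "x \<in> nth_least V ` {..<card V}" by simp
  qed (use assms(1) nth_least_in in auto)
  finally show ?thesis .
qed

lemma pattern_on_st:
  assumes "distinct w"
  shows "pattern_on (set w) (st w) = w"
proof (rule nth_equalityI)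
  fix j assume "j < length (pattern_on (set w) (st w))"
  hence j: "j < length w" by simp
  obtain s where s: "s < card (set w)" "nth_least (set w) s = w!j"
    using nth_least_surj[of "set w" "w!j"] j by auto
  have "st w ! j = Suc s"
    using j s card_le_nth_least[of "set w" s] by (simp add: nth_st)
  thus "pattern_on (set w) (st w) ! j = w ! j"
    using j s by (simp add: nth_pattern_on)
qed simp

lemma eq_if_order_isomorphic_same_set:
  assumes "distinct u" "distinct v" "set u = set v" "order_isomorphic u v"
  shows "u = v"
proof -
  have "st u = st v"
    using st_eq_iff_order_isomorphic[OF assms(1,2)] assms(4) by simp
  have "u = pattern_on (set u) (st u)"
    using pattern_on_st[OF assms(1)] by simp
  also have "\<dots> = pattern_on (set v) (st v)"
    using \<open>st u = st v\<close> assms(3) by simp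
  also have "\<dots> = v"
    using pattern_on_st[OF assms(2)] .
  finally show ?thesis .
qed

definition window :: "nat list \<Rightarrow> nat \<Rightarrow> nat \<Rightarrow> nat list" where
  "window s m a = take m (drop a s)"

lemma length_window: "a + m \<le> length s \<Longrightarrow> length (window s m a) = m"
  by (simp add: window_def)

lemma nth_window: "a + m \<le> length s \<Longrightarrow> j < m \<Longrightarrow> window s m a ! j = s ! (a + j)"
  by (simp add: window_def)

lemma distinct_window: "distinct s \<Longrightarrow> distinct (window s m a)"
  by (simp add: window_def)

lemma set_window_subset: "set (window s m a) \<subseteq> set s"
  by (metis window_def set_drop_subset set_take_subset subset_trans)

lemma drop_window: "drop d (window s m a) = take (m - d) (window s m (a + d))"
  by (simp add: window_def drop_take add.commute)

lemma nth_in_set_window: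
  assumes "a \<le> x" "x < a + m" "a + m \<le> length s"
  shows "s ! x \<in> set (window s m a)"
proof -
  have "s ! x = window s m a ! (x - a)"
    using assms by (simp add: nth_window)
  thus ?thesis
    using assms by (simp add: length_window)
qed

lemma Em_iff_window:
  "length p = m \<Longrightarrow> k \<in> Em p s \<longleftrightarrow> 1 \<le> k \<and> k - 1 + m \<le> length s \<and> st (window s m (k - 1)) = p"
  by (auto simp: Em_def window_def)

lemma Em_subset: "Em p s \<subseteq> {1..Suc (length s)}"
  by (auto simp: Em_def)

lemma overlap_if_shifted_pattern_on:
  assumes p: "p \<in> perms m" and V: "card Va = m" "card Vb = m" and d: "0 < d" "d < m"
    and shift: "drop d (pattern_on Va p) = take (m - d) (pattern_on Vb p)"
  shows "d \<in> overlap p"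
proof -
  have "finite Va" "finite Vb" "set p \<subseteq> {1..m}"
    using V d p by (auto simp: perms_def card_ge_0_finite)
  hence "order_isomorphic (pattern_on Va p) p" "order_isomorphic (pattern_on Vb p) p"
    using V by (simp_all add: order_isomorphic_pattern_on)
  hence "order_isomorphic (drop d p) (take (m - d) p)"
    using shift order_isomorphic_trans order_isomorphic_sym order_isomorphic_drop order_isomorphic_take
    by metis
  hence "st (drop d p) = st (take (length p - d) p)"
    using st_eq_iff_order_isomorphic perms_distinct[OF p] perms_length[OF p] by simp
  thus ?thesis
    using d perms_length[OF p] by (simp add: overlap_def)
qed

locale compatible_patterns =
  fixes p t :: "nat list" and m :: nat
  assumes p_perm: "p \<in> perms m" and t_perm: "t \<in> perms m"
    and same_overlap: "overlap p = overlap t"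
    and same_sets: "\<forall>i\<in>overlap p. set (take (m - i) p) = set (take (m - i) t)
                                   \<and> set (drop i p) = set (drop i t)"
begin

lemma swap_patterns: "compatible_patterns t p m"
  using p_perm t_perm same_overlap same_sets by unfold_locales auto

lemma length_p: "length p = m" and length_t: "length t = m"
  using p_perm t_perm by (simp_all add: perms_length)

lemma shifted_pattern_on_transfer:
  assumes V: "card Va = m" "card Vb = m" and d: "0 < d" "d < m"
    and shift: "drop d (pattern_on Va p) = take (m - d) (pattern_on Vb p)"
  shows "drop d (pattern_on Va t) = take (m - d) (pattern_on Vb t)"
proof -
  have fin: "finite Va" "finite Vb"
    using V d by (auto simp: card_ge_0_finite)
  have dp: "d \<in> overlap p"
    by (rule overlap_if_shifted_pattern_on[OF p_perm V d shift])
  hence "d \<in> overlap t"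
    using same_overlap by simp
  hence "st (drop d t) = st (take (m - d) t)"
    using length_t by (simp add: overlap_def)
  hence "order_isomorphic (drop d t) (take (m - d) t)"
    using st_eq_iff_order_isomorphic perms_distinct[OF t_perm] by simp
  moreover have "set (drop d t) \<subseteq> {1..card Va}" "set (take (m - d) t) \<subseteq> {1..card Vb}"
    using t_perm V set_drop_subset set_take_subset by (fastforce simp: perms_def)+
  ultimately have iso: "order_isomorphic (pattern_on Va (drop d t)) (pattern_on Vb (take (m - d) t))"
    using fin order_isomorphic_pattern_on order_isomorphic_trans order_isomorphic_sym by metis
  have "set (pattern_on Va (drop d t)) = set (drop d (pattern_on Va p))"
    using dp same_sets by (simp add: drop_pattern_on set_pattern_on)
  also have "\<dots> = set (pattern_on Vb (take (m - d) t))"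
    using dp same_sets by (simp add: shift take_pattern_on set_pattern_on)
  finally have "pattern_on Va (drop d t) = pattern_on Vb (take (m - d) t)"
    using iso distinct_pattern_on fin perms_distinct[OF t_perm] \<open>set (drop d t) \<subseteq> _\<close>
      \<open>set (take (m - d) t) \<subseteq> _\<close> eq_if_order_isomorphic_same_set by simp
  thus ?thesis
    by (simp add: drop_pattern_on take_pattern_on)
qed

end

definition covering_starts :: "nat set \<Rightarrow> nat \<Rightarrow> nat \<Rightarrow> nat set" where
  "covering_starts S m x = {k\<in>S. k - 1 \<le> x \<and> x < k - 1 + m}"

definition first_covering :: "nat set \<Rightarrow> nat \<Rightarrow> nat \<Rightarrow> nat" where
  "first_covering S m x = (LEAST k. k \<in> covering_starts S m x)"

(* Positions in S are 1-based, as in Em, so the window of k \<in> S starts at index k - 1.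
   Using the first covering window is a mere choice: all windows of S covering x give the same
   value by nth_repattern_in_occurrence. *)
definition repattern :: "nat list \<Rightarrow> nat \<Rightarrow> nat set \<Rightarrow> nat list \<Rightarrow> nat list" where
  "repattern q m S s = map (\<lambda>x. if covering_starts S m x = {} then s ! x
     else nth_least (set (window s m (first_covering S m x - 1))) (q ! (x - (first_covering S m x - 1)) - 1))
     [0..<length s]"

lemma length_repattern [simp]: "length (repattern q m S s) = length s"
  by (simp add: repattern_def)

lemma nth_repattern:
  "x < length s \<Longrightarrow> repattern q m S s ! x = (if covering_starts S m x = {} then s ! x
     else nth_least (set (window s m (first_covering S m x - 1))) (q ! (x - (first_covering S m x - 1)) - 1))"
  by (simp add: repattern_def)

lemma first_covering:
  assumes "covering_starts S m x \<noteq> {}"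
  shows "first_covering S m x \<in> S" "first_covering S m x - 1 \<le> x" "x < first_covering S m x - 1 + m"
    and "k \<in> covering_starts S m x \<Longrightarrow> first_covering S m x \<le> k"
proof -
  have "first_covering S m x \<in> covering_starts S m x"
    unfolding first_covering_def using assms by (auto intro: LeastI)
  thus "first_covering S m x \<in> S" "first_covering S m x - 1 \<le> x" "x < first_covering S m x - 1 + m"
    by (auto simp: covering_starts_def)
  show "k \<in> covering_starts S m x \<Longrightarrow> first_covering S m x \<le> k"
    unfolding first_covering_def by (rule Least_le)
qed

context compatible_patterns
begin

context
  fixes n :: nat and S :: "nat set" and s :: "nat list"
  assumes s_perm: "s \<in> perms n" and S_occurrences: "S \<subseteq> Em p s"
begin

lemma length_s: "length s = n"
  using s_perm by (rule perms_length)

lemma occurrence_window: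
  assumes "k \<in> S"
  shows "1 \<le> k" "k - 1 + m \<le> n" "st (window s m (k - 1)) = p"
    and "card (set (window s m (k - 1))) = m"
    and "window s m (k - 1) = pattern_on (set (window s m (k - 1))) p"
proof -
  show "1 \<le> k" and bound: "k - 1 + m \<le> n" and std: "st (window s m (k - 1)) = p"
    using assms S_occurrences Em_iff_window[OF length_p] length_s by blast+
  have "distinct (window s m (k - 1))"
    using perms_distinct[OF s_perm] by (rule distinct_window)
  moreover have "length (window s m (k - 1)) = m"
    using bound length_s by (intro length_window) simp
  ultimately show "card (set (window s m (k - 1))) = m"
    by (simp add: distinct_card)
  show "window s m (k - 1) = pattern_on (set (window s m (k - 1))) p"
    using std pattern_on_st[OF \<open>distinct (window s m (k - 1))\<close>] by simp
qed

lemma nth_repattern_in_occurrence: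
  assumes k: "k \<in> S" and j: "j < m"
  shows "repattern t m S s ! (k - 1 + j) = nth_least (set (window s m (k - 1))) (t ! j - 1)"
proof -
  define x where "x = k - 1 + j"
  have "k \<in> covering_starts S m x"
    using k j by (simp add: covering_starts_def x_def)
  hence covered: "covering_starts S m x \<noteq> {}" by blast
  define k0 where "k0 = first_covering S m x"
  have k0: "k0 \<in> S" "k0 - 1 \<le> x" "x < k0 - 1 + m" "k0 \<le> k"
    using first_covering[OF covered] \<open>k \<in> covering_starts S m x\<close> by (simp_all add: k0_def)
  have "x < n"
    using occurrence_window(2)[OF k] j by (simp add: x_def)
  hence x_value: "repattern t m S s ! x = nth_least (set (window s m (k0 - 1))) (t ! (x - (k0 - 1)) - 1)"
    using covered length_s by (simp add: nth_repattern k0_def)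
  show ?thesis
  proof (cases "k0 = k")
    case True
    thus ?thesis using x_value by (simp add: x_def)
  next
    case False
    define d where "d = k - k0"
    define Va Vb where "Va = set (window s m (k0 - 1))" and "Vb = set (window s m (k - 1))"
    have d: "0 < d" "d < m" "k - 1 = k0 - 1 + d" "x - (k0 - 1) = d + j"
      using False k0 occurrence_window(1)[OF k0(1)] by (auto simp: d_def x_def)
    have "drop d (pattern_on Va p) = take (m - d) (pattern_on Vb p)"
      using drop_window[of d s m "k0 - 1"] occurrence_window(5)[OF k0(1)] occurrence_window(5)[OF k] d
      by (simp add: Va_def Vb_def)
    moreover have "card Va = m" "card Vb = m"
      using occurrence_window(4) k k0(1) by (simp_all add: Va_def Vb_def)
    ultimately have shift: "drop d (pattern_on Va t) = take (m - d) (pattern_on Vb t)"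
      using shifted_pattern_on_transfer d(1,2) by blast
    have "d + j < m"
      using d(4) k0(2,3) by linarith
    have "repattern t m S s ! x = pattern_on Va t ! (d + j)"
      using x_value d(4) \<open>d + j < m\<close> length_t by (simp add: nth_pattern_on Va_def)
    also have "\<dots> = drop d (pattern_on Va t) ! j"
      using \<open>d + j < m\<close> length_t by simp
    also have "\<dots> = pattern_on Vb t ! j"
      using shift \<open>d + j < m\<close> by simp
    also have "\<dots> = nth_least Vb (t ! j - 1)"
      using j length_t by (simp add: nth_pattern_on)
    finally show ?thesis
      by (simp add: x_def Vb_def)
  qed
qed

lemma window_repattern:
  assumes k: "k \<in> S"
  shows "window (repattern t m S s) m (k - 1) = pattern_on (set (window s m (k - 1))) t"
proof (rule nth_equalityI)
  have bound: "k - 1 + m \<le> length (repattern t m S s)"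
    using occurrence_window(2)[OF k] length_s by simp
  thus "length (window (repattern t m S s) m (k - 1)) = length (pattern_on (set (window s m (k - 1))) t)"
    using length_t by (simp add: length_window)
  fix j assume "j < length (window (repattern t m S s) m (k - 1))"
  hence j: "j < m"
    using bound by (simp add: length_window)
  thus "window (repattern t m S s) m (k - 1) ! j = pattern_on (set (window s m (k - 1))) t ! j"
    using bound nth_repattern_in_occurrence[OF k j] length_t by (simp add: nth_window nth_pattern_on)
qed

lemma set_window_repattern:
  assumes "k \<in> S"
  shows "set (window (repattern t m S s) m (k - 1)) = set (window s m (k - 1))"
  using window_repattern[OF assms] occurrence_window(4)[OF assms] t_perm
  by (simp add: set_pattern_on_perm)

lemma st_window_repattern:
  assumes "k \<in> S"
  shows "st (window (repattern t m S s) m (k - 1)) = t"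
proof -
  let ?V = "set (window s m (k - 1))"
  have "finite ?V" "set t \<subseteq> {1..card ?V}"
    using occurrence_window(4)[OF assms] t_perm by (simp_all add: perms_def)
  hence "distinct (pattern_on ?V t)" "order_isomorphic (pattern_on ?V t) t"
    using perms_distinct[OF t_perm] by (simp_all add: distinct_pattern_on order_isomorphic_pattern_on)
  thus ?thesis
    using window_repattern[OF assms] st_eq_perm_iff t_perm by simp
qed

lemma occurrences_repattern: "S \<subseteq> Em t (repattern t m S s)"
  using occurrence_window(1,2) st_window_repattern Em_iff_window[OF length_t] length_s by auto

lemma repattern_perm: "repattern t m S s \<in> perms n"
proof -
  let ?r = "repattern t m S s"
  have "?r ! x \<in> set s \<and> s ! x \<in> set ?r" if x: "x < n" for x
  proof (cases "covering_starts S m x = {}")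
    case True
    thus ?thesis
      using x length_s nth_mem[of x ?r] nth_mem[of x s] by (simp add: nth_repattern)
  next
    case False
    define k where "k = first_covering S m x"
    have k: "k \<in> S" "k - 1 \<le> x" "x < k - 1 + m"
      using first_covering[OF False] by (simp_all add: k_def)
    have "k - 1 + m \<le> length s" "k - 1 + m \<le> length ?r"
      using occurrence_window(2)[OF k(1)] length_s by simp_all
    hence "?r ! x \<in> set (window s m (k - 1))" "s ! x \<in> set (window ?r m (k - 1))"
      using k nth_in_set_window set_window_repattern[OF k(1)] by blast+
    thus ?thesis
      using set_window_subset by blast
  qed
  hence "set ?r = set s"
    using length_s by (auto simp: in_set_conv_nth)
  moreover from this have "distinct ?r"
    using length_s perms_distinct[OF s_perm] by (simp add: card_distinct distinct_card)
  ultimately show ?thesis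
    using s_perm by (simp add: perms_def)
qed

lemma repattern_inverse: "repattern p m S (repattern t m S s) = s"
proof (rule nth_equalityI)
  fix x assume "x < length (repattern p m S (repattern t m S s))"
  hence x: "x < n" using length_s by simp
  show "repattern p m S (repattern t m S s) ! x = s ! x"
  proof (cases "covering_starts S m x = {}")
    case True
    thus ?thesis using x length_s by (simp add: nth_repattern)
  next
    case False
    define k where "k = first_covering S m x"
    have k: "k \<in> S" "k - 1 \<le> x" "x < k - 1 + m"
      using first_covering[OF False] by (simp_all add: k_def)
    have "repattern p m S (repattern t m S s) ! x = pattern_on (set (window s m (k - 1))) p ! (x - (k - 1))"
      using x length_s False k length_p set_window_repattern[OF k(1)]
      by (simp add: nth_repattern nth_pattern_on k_def)
    also have "\<dots> = window s m (k - 1) ! (x - (k - 1))"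
      using occurrence_window(5)[OF k(1)] by simp
    also have "\<dots> = s ! x"
      using k occurrence_window(2)[OF k(1)] length_s by (simp add: nth_window)
    finally show ?thesis .
  qed
qed (simp add: length_s)

end

end

context compatible_patterns
begin

lemma bij_betw_repattern:
  "bij_betw (repattern t m S) {s\<in>perms n. S \<subseteq> Em p s} {s\<in>perms n. S \<subseteq> Em t s}"
proof (rule bij_betw_byWitness[where f' = "repattern p m S"])
  interpret swapped: compatible_patterns t p m
    by (rule swap_patterns)
  show "\<forall>s\<in>{s\<in>perms n. S \<subseteq> Em p s}. repattern p m S (repattern t m S s) = s"
    using repattern_inverse by blast
  show "\<forall>s\<in>{s\<in>perms n. S \<subseteq> Em t s}. repattern t m S (repattern p m S s) = s"
    using swapped.repattern_inverse by blast
  show "repattern t m S ` {s\<in>perms n. S \<subseteq> Em p s} \<subseteq> {s\<in>perms n. S \<subseteq> Em t s}"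
    using repattern_perm occurrences_repattern by blast
  show "repattern p m S ` {s\<in>perms n. S \<subseteq> Em t s} \<subseteq> {s\<in>perms n. S \<subseteq> Em p s}"
    using swapped.repattern_perm swapped.occurrences_repattern by blast
qed

lemma card_occurrence_supersets_eq:
  "card {s\<in>perms n. S \<subseteq> Em p s} = card {s\<in>perms n. S \<subseteq> Em t s}"
  using bij_betw_repattern by (rule bij_betw_same_card)

end

lemma card_superset_eq_sum_card_eq:
  fixes f :: "'a \<Rightarrow> 'b set"
  assumes "finite U" "finite X" "\<forall>x\<in>X. f x \<subseteq> U"
  shows "card {x\<in>X. T \<subseteq> f x} = (\<Sum>R\<in>{R. T \<subseteq> R \<and> R \<subseteq> U}. card {x\<in>X. f x = R})"
proof -
  have "{x\<in>X. T \<subseteq> f x} = (\<Union>R\<in>{R. T \<subseteq> R \<and> R \<subseteq> U}. {x\<in>X. f x = R})"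
    using assms(3) by auto
  moreover have "finite {R. T \<subseteq> R \<and> R \<subseteq> U}"
    using assms(1) by (rule finite_subset[rotated, OF finite_Pow_iff[THEN iffD2]]) auto
  ultimately show ?thesis
    using assms(2) by (simp add: card_UN_disjoint disjoint_iff)
qed

lemma card_eq_if_card_supersets_eq:
  fixes f :: "'a \<Rightarrow> 'b set" and g :: "'c \<Rightarrow> 'b set"
  assumes U: "finite U" and X: "finite X" "\<forall>x\<in>X. f x \<subseteq> U" and Y: "finite Y" "\<forall>y\<in>Y. g y \<subseteq> U"
    and supersets: "\<And>T. T \<subseteq> U \<Longrightarrow> card {x\<in>X. T \<subseteq> f x} = card {y\<in>Y. T \<subseteq> g y}"
  shows "card {x\<in>X. f x = S} = card {y\<in>Y. g y = S}"
proof (cases "S \<subseteq> U")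
  case False
  hence "{x\<in>X. f x = S} = {}" "{y\<in>Y. g y = S} = {}"
    using X Y by auto
  thus ?thesis by (simp only: card.empty)
next
  case True
  thus ?thesis
  proof (induction "card (U - S)" arbitrary: S rule: less_induct)
    case less
    define B where "B = {R. S \<subseteq> R \<and> R \<subseteq> U} - {S}"
    have "finite {R. S \<subseteq> R \<and> R \<subseteq> U}"
      using U by (rule finite_subset[rotated, OF finite_Pow_iff[THEN iffD2]]) auto
    hence split: "{R. S \<subseteq> R \<and> R \<subseteq> U} = insert S B" "S \<notin> B" "finite B"
      using less.prems by (auto simp: B_def)
    have "card {x\<in>X. f x = R} = card {y\<in>Y. g y = R}" if "R \<in> B" for R
    proof -
      have "U - R \<subset> U - S"
        using that by (auto simp: B_def)
      hence "card (U - R) < card (U - S)"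
        using U by (intro psubset_card_mono) auto
      thus ?thesis
        using less.hyps that by (auto simp: B_def)
    qed
    hence "(\<Sum>R\<in>B. card {x\<in>X. f x = R}) = (\<Sum>R\<in>B. card {y\<in>Y. g y = R})"
      by (rule sum.cong[OF refl])
    thus ?case
      using supersets[OF less.prems] card_superset_eq_sum_card_eq[OF U X, of S]
        card_superset_eq_sum_card_eq[OF U Y, of S] split
      by simp
  qed
qed

theorem theorem1p11:
  fixes p t :: "nat list" and m :: nat
  assumes "p \<in> perms m" and "t \<in> perms m"
    and "overlap p = overlap t"
    and "\<forall>i \<in> overlap p. set (take (m - i) p) = set (take (m - i) t)
                          \<and> set (drop i p) = set (drop i t)"
  shows "super_strongly_cWilf_equiv p t"
proof -
  interpret compatible_patterns p t m
    using assms by unfold_locales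
  have "card {s\<in>perms n. Em p s = S} = card {s\<in>perms n. Em t s = S}" for n S
  proof (rule card_eq_if_card_supersets_eq[where U = "{1..Suc n}"])
    show "\<forall>s\<in>perms n. Em p s \<subseteq> {1..Suc n}" "\<forall>s\<in>perms n. Em t s \<subseteq> {1..Suc n}"
      using Em_subset perms_length by metis+
  qed (simp_all add: finite_perms card_occurrence_supersets_eq)
  thus ?thesis
    by (simp add: super_strongly_cWilf_equiv_def a_count_def)
qed

end
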